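(* Let $n\ge 1$ and $N=2^n$. Let $H=\frac{1}{\sqrt2}\begin{bmatrix}1&1\\1&-1\end{bmatrix}$ be the Hadamard matrix and let $Z_{2N}$ be the $2N\times 2N$ cyclic downshift matrix, i.e. $Z_{2N}\ket{j}=\ket{(j+1)\bmod 2N}$ for $j=0,\dots,2N-1$. Define the block-diagonal unitary $$Z_{\rm block}=\sum_{k=0}^{N-1}\ket{k}\bra{k}\otimes Z_{2N}^{\,k}\in\mathbb{C}^{N\cdot 2N\times N\cdot 2N},$$ (first tensor factor: an $n$-qubit register indexed by $k\in\{0,\dots,N-1\}$; second factor: an $(n+1)$-qubit register indexed by $\{0,\dots,2N-1\}$), and $$U_L=(H^{\otimes n}\otimes I_{2N})\,Z_{\rm block}\,(H^{\otimes n}\otimes I_{2N}).$$ Let $L$ be the $N\times N$ lower triangular matrix with all entries on and below the diagonal equal to $1$ and all entries above the diagonal equal to $0$. Then for all $i,j\in\{0,\dots,N-1\}$, $$(\bra{0^n}\otimes\bra{i})\,U_L\,(\ket{0^n}\otimes\ket{j})=\frac{1}{N}L_{ij},$$ where $\ket{i},\ket{j}$ denote standard basis vectors of $\mathbb{C}^{2N}$ (so the indices $i,j<N$ correspond to the most significant qubit of the second register being $0$). In other words, $U_L$ is an $(N,\log_2 N+1,0)$-block encoding of $L$. *)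

theory Defs
  imports Complex_Main "Jordan_Normal_Form.Matrix"
begin

text \<open>Kronecker (tensor) product, big-endian: index (a,b) of A tensor B is a * dim B + b.\<close>
definition kron :: "complex mat \<Rightarrow> complex mat \<Rightarrow> complex mat" where
  "kron A B = mat (dim_row A * dim_row B) (dim_col A * dim_col B)
     (\<lambda>(i,j). A $$ (i div dim_row B, j div dim_col B) * B $$ (i mod dim_row B, j mod dim_col B))"

definition hadamard :: "complex mat" where
  "hadamard = mat 2 2 (\<lambda>(i,j). if i = 1 \<and> j = 1 then - 1 / complex_of_real (sqrt 2)
                                else 1 / complex_of_real (sqrt 2))"

fun hadamard_pow :: "nat \<Rightarrow> complex mat" where
  "hadamard_pow 0 = 1\<^sub>m 1"
| "hadamard_pow (Suc n) = kron hadamard (hadamard_pow n)"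

definition downshift :: "nat \<Rightarrow> complex mat" where
  "downshift M = mat M M (\<lambda>(i,j). if i = (j + 1) mod M then 1 else 0)"

definition ket :: "nat \<Rightarrow> nat \<Rightarrow> complex mat" where
  "ket d i = mat d 1 (\<lambda>(r,c). if r = i then 1 else 0)"

definition bra :: "nat \<Rightarrow> nat \<Rightarrow> complex mat" where
  "bra d i = transpose_mat (ket d i)"

fun zblock_partial :: "nat \<Rightarrow> nat \<Rightarrow> complex mat" where
  "zblock_partial N 0 = 0\<^sub>m (N * (2 * N)) (N * (2 * N))"
| "zblock_partial N (Suc k) =
     zblock_partial N k + kron (ket N k * bra N k) (downshift (2 * N) ^\<^sub>m k)"

definition zblock :: "nat \<Rightarrow> complex mat" where
  "zblock n = zblock_partial (2 ^ n) (2 ^ n)"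

definition U_L :: "nat \<Rightarrow> complex mat" where
  "U_L n = kron (hadamard_pow n) (1\<^sub>m (2 * 2 ^ n)) * zblock n
           * kron (hadamard_pow n) (1\<^sub>m (2 * 2 ^ n))"

definition lower_ones :: "nat \<Rightarrow> complex mat" where
  "lower_ones N = mat N N (\<lambda>(i,j). if j \<le> i then 1 else 0)"

end

theory Submission
  imports Defs
begin

text \<open>
  The Hadamard layers act on the first register only, so between basis states whose first
  register is 0 the block-diagonal structure of Z_block gives
  U_L(i, j) = sum over k < N of H(0, k) H(k, 0) (Z^k)(i, j), where H is the n-fold Hadamard
  power. Every entry in the first row and column of H is 2^(-n/2), and for i, j < N the shift
  Z^k on 2N points sends j to i iff k = i - j with j <= i, since the doubled dimension rules out
  wrap-around.
\<close>

lemma mult_add_less_mult_nat: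
  fixes a i m n :: nat
  assumes "a < n" "i < m"
  shows "a * m + i < n * m"
proof -
  have "(a + 1) * m \<le> n * m"
    using assms by (intro mult_right_mono) auto
  with assms show ?thesis by simp
qed

lemma sum_lessThan_mult_nat:
  "(\<Sum>a<p * q. f a) = (\<Sum>k<p. \<Sum>r<q. f (k * q + r :: nat))"
proof -
  have "sum f {k * q..<k * q + q} = (\<Sum>r<q. f (k * q + r))" for k
    using sum.shift_bounds_nat_ivl[of f 0 "k * q" q]
    by (simp add: atLeast0LessThan add.commute)
  then show ?thesis
    by (simp flip: sum.nat_group[of f q p])
qed

lemma index_mult_mat_sum:
  assumes "i < dim_row A" "j < dim_col B" "dim_col A = dim_row B"
  shows "(A * B) $$ (i, j) = (\<Sum>l<dim_row B. A $$ (i, l) * B $$ (l, j))"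
  using assms by (auto simp: scalar_prod_def lessThan_atLeast0 intro!: sum.cong)

lemma dim_kron [simp]:
  "dim_row (kron A B) = dim_row A * dim_row B"
  "dim_col (kron A B) = dim_col A * dim_col B"
  by (simp_all add: kron_def)

lemma index_kron:
  assumes "A \<in> carrier_mat n m" "B \<in> carrier_mat p q" "a < n" "b < m" "i < p" "j < q"
  shows "kron A B $$ (a * p + i, b * q + j) = A $$ (a, b) * B $$ (i, j)"
  using assms by (simp add: kron_def mult_add_less_mult_nat)

lemma index_kron_one_mult:
  assumes "A \<in> carrier_mat n N" "Y \<in> carrier_mat (N * M) m" "a < n" "i < M" "b < m"
  shows "(kron A (1\<^sub>m M) * Y) $$ (a * M + i, b) = (\<Sum>k<N. A $$ (a, k) * Y $$ (k * M + i, b))"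
proof -
  have "(kron A (1\<^sub>m M) * Y) $$ (a * M + i, b)
      = (\<Sum>k<N. \<Sum>r<M. kron A (1\<^sub>m M) $$ (a * M + i, k * M + r) * Y $$ (k * M + r, b))"
    using assms
    by (simp del: index_mult_mat add: index_mult_mat_sum sum_lessThan_mult_nat mult_add_less_mult_nat)
  also have "\<dots> = (\<Sum>k<N. \<Sum>r<M. if r = i then A $$ (a, k) * Y $$ (k * M + i, b) else 0)"
    using assms index_kron[OF assms(1) one_carrier_mat[of M] \<open>a < n\<close> _ \<open>i < M\<close>]
    by (intro sum.cong) auto
  finally show ?thesis
    using assms by simp
qed

lemma index_mult_kron_one:
  assumes "Y \<in> carrier_mat m (N * M)" "C \<in> carrier_mat N n" "b < m" "c < n" "j < M"
  shows "(Y * kron C (1\<^sub>m M)) $$ (b, c * M + j) = (\<Sum>k<N. Y $$ (b, k * M + j) * C $$ (k, c))"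
proof -
  have "(Y * kron C (1\<^sub>m M)) $$ (b, c * M + j)
      = (\<Sum>k<N. \<Sum>r<M. Y $$ (b, k * M + r) * kron C (1\<^sub>m M) $$ (k * M + r, c * M + j))"
    using assms
    by (simp del: index_mult_mat add: index_mult_mat_sum sum_lessThan_mult_nat mult_add_less_mult_nat)
  also have "\<dots> = (\<Sum>k<N. \<Sum>r<M. if r = j then Y $$ (b, k * M + j) * C $$ (k, c) else 0)"
    using assms index_kron[OF assms(2) one_carrier_mat[of M] _ \<open>c < n\<close> _ \<open>j < M\<close>]
    by (intro sum.cong) auto
  finally show ?thesis
    using assms by simp
qed

lemma dim_hadamard_pow [simp]:
  "dim_row (hadamard_pow n) = 2 ^ n" "dim_col (hadamard_pow n) = 2 ^ n"
  by (induction n) (simp_all add: hadamard_def)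

lemma hadamard_pow_first_row_col:
  assumes "k < 2 ^ n" "l < 2 ^ n" "k = 0 \<or> l = 0"
  shows "hadamard_pow n $$ (k, l) = (1 / complex_of_real (sqrt 2)) ^ n"
  using assms
proof (induction n arbitrary: k l)
  case 0
  then show ?case by simp
next
  case (Suc n)
  have "k div 2 ^ n < 2" "l div 2 ^ n < 2"
    using Suc.prems by (simp_all add: less_mult_imp_div_less mult.commute)
  with Suc show ?case
    by (auto simp: kron_def hadamard_def)
qed

lemma hadamard_pow_first_row_col_mult:
  assumes "k < 2 ^ n"
  shows "hadamard_pow n $$ (0, k) * hadamard_pow n $$ (k, 0) = 1 / 2 ^ n"
proof -
  have "1 / complex_of_real (sqrt 2) * (1 / complex_of_real (sqrt 2)) = 1 / 2"
    by (simp flip: of_real_mult)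
  then show ?thesis
    using assms by (simp add: hadamard_pow_first_row_col power_one_over flip: power_mult_distrib)
qed

lemma dim_downshift [simp]: "dim_row (downshift M) = M" "dim_col (downshift M) = M"
  by (simp_all add: downshift_def)

lemma downshift_pow_carrier_mat: "downshift M ^\<^sub>m k \<in> carrier_mat M M"
  by (simp add: downshift_def pow_carrier_mat)

lemma index_downshift_pow:
  assumes "i < M" "j < M"
  shows "(downshift M ^\<^sub>m k) $$ (i, j) = (if i = (j + k) mod M then 1 else 0)"
  using assms
proof (induction k arbitrary: j)
  case 0
  then show ?case by simp
next
  case (Suc k)
  have "(downshift M ^\<^sub>m Suc k) $$ (i, j)
      = (\<Sum>l<M. (downshift M ^\<^sub>m k) $$ (i, l) * downshift M $$ (l, j))"
    using Suc.prems downshift_pow_carrier_mat[of M k]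
    by (simp add: index_mult_mat_sum del: index_mult_mat(1))
  also have "\<dots> = (\<Sum>l<M. if l = (j + 1) mod M then (downshift M ^\<^sub>m k) $$ (i, l) else 0)"
    using Suc.prems by (intro sum.cong) (auto simp: downshift_def)
  also have "\<dots> = (downshift M ^\<^sub>m k) $$ (i, (j + 1) mod M)"
    using Suc.prems by simp
  also have "\<dots> = (if i = (j + Suc k) mod M then 1 else 0)"
    using Suc by (simp add: mod_add_left_eq)
  finally show ?case .
qed

lemma dim_ket [simp]: "dim_row (ket d i) = d" "dim_col (ket d i) = 1"
  by (simp_all add: ket_def)

lemma dim_bra [simp]: "dim_row (bra d i) = 1" "dim_col (bra d i) = d"
  by (simp_all add: bra_def)

lemma ket_mult_bra: "ket N k * bra N k = mat N N (\<lambda>(p, q). if p = k \<and> q = k then 1 else 0)"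
  by (rule eq_matI) (simp_all add: ket_def bra_def scalar_prod_def)

lemma kron_ket:
  assumes "a < N" "i < M"
  shows "kron (ket N a) (ket M i) = ket (N * M) (a * M + i)"
proof (rule eq_matI)
  fix p q
  assume "p < dim_row (ket (N * M) (a * M + i))" "q < dim_col (ket (N * M) (a * M + i))"
  then show "kron (ket N a) (ket M i) $$ (p, q) = ket (N * M) (a * M + i) $$ (p, q)"
    using assms by (auto simp: kron_def ket_def less_mult_imp_div_less)
qed simp_all

lemma kron_bra:
  assumes "a < N" "i < M"
  shows "kron (bra N a) (bra M i) = bra (N * M) (a * M + i)"
proof (rule eq_matI)
  fix p q
  assume "p < dim_row (bra (N * M) (a * M + i))" "q < dim_col (bra (N * M) (a * M + i))"
  then show "kron (bra N a) (bra M i) $$ (p, q) = bra (N * M) (a * M + i) $$ (p, q)"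
    using assms by (auto simp: kron_def bra_def ket_def less_mult_imp_div_less)
qed simp_all

lemma index_bra_mult_ket:
  assumes "A \<in> carrier_mat D D" "i < D" "j < D"
  shows "(bra D i * A * ket D j) $$ (0, 0) = A $$ (i, j)"
proof -
  have "(bra D i * A * ket D j) $$ (0, 0)
      = (\<Sum>l<D. (\<Sum>m<D. bra D i $$ (0, m) * A $$ (m, l)) * ket D j $$ (l, 0))"
    using assms by (auto simp: index_mult_mat_sum simp del: index_mult_mat(1))
  then show ?thesis
    using assms by (simp add: bra_def ket_def flip: of_bool_def)
qed

lemma dim_zblock_partial [simp]:
  "dim_row (zblock_partial N m) = N * (2 * N)" "dim_col (zblock_partial N m) = N * (2 * N)"
  by (induction m) simp_all

lemma index_zblock_partial:
  assumes "k < N" "l < N" "r < 2 * N" "s < 2 * N"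
  shows "zblock_partial N m $$ (k * (2 * N) + r, l * (2 * N) + s)
       = (if k = l \<and> k < m then (downshift (2 * N) ^\<^sub>m k) $$ (r, s) else 0)"
proof (induction m)
  case 0
  then show ?case
    using assms by (simp add: mult_add_less_mult_nat)
next
  case (Suc m)
  have "kron (ket N m * bra N m) (downshift (2 * N) ^\<^sub>m m) $$ (k * (2 * N) + r, l * (2 * N) + s)
      = (if k = m \<and> l = m then (downshift (2 * N) ^\<^sub>m m) $$ (r, s) else 0)"
  proof -
    have "ket N m * bra N m \<in> carrier_mat N N"
      by (simp add: ket_mult_bra)
    from index_kron[OF this downshift_pow_carrier_mat] assms show ?thesis
      by (simp add: ket_mult_bra)
  qed
  with Suc show ?case
    using assms downshift_pow_carrier_mat[of "2 * N" m] by (auto simp: mult_add_less_mult_nat)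
qed

lemma index_U_L:
  assumes "i < 2 ^ n" "j < 2 ^ n"
  shows "U_L n $$ (i, j) = (if j \<le> i then 1 / 2 ^ n else 0)"
proof -
  define N :: nat where "N = 2 ^ n"
  define M where "M = 2 * N"
  define H where "H = hadamard_pow n"
  define Z where "Z = zblock n"
  have H: "H \<in> carrier_mat N N"
    by (rule carrier_matI) (simp_all add: H_def N_def)
  have Z: "Z \<in> carrier_mat (N * M) (N * M)"
    by (rule carrier_matI) (simp_all add: Z_def zblock_def N_def M_def)
  have ij: "i < N" "j < N" "i < M" "j < M"
    using assms by (simp_all add: N_def M_def)
  then have i_NM: "i < N * M"
    using mult_add_less_mult_nat[of 0 N i M] by simp
  have row: "(kron H (1\<^sub>m M) * Z) $$ (i, l * M + j) = H $$ (0, l) * (downshift M ^\<^sub>m l) $$ (i, j)"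
    if "l < N" for l
  proof -
    have "(kron H (1\<^sub>m M) * Z) $$ (0 * M + i, l * M + j)
        = (\<Sum>k<N. H $$ (0, k) * Z $$ (k * M + i, l * M + j))"
      using H Z ij that by (intro index_kron_one_mult) (auto simp: mult_add_less_mult_nat)
    also have "\<dots> = (\<Sum>k<N. if k = l then H $$ (0, k) * (downshift M ^\<^sub>m k) $$ (i, j) else 0)"
      using ij that by (intro sum.cong) (simp_all add: Z_def zblock_def M_def N_def index_zblock_partial)
    finally show ?thesis
      using that by simp
  qed
  have "U_L n $$ (i, 0 * M + j)
      = (\<Sum>l<N. (kron H (1\<^sub>m M) * Z) $$ (i, l * M + j) * H $$ (l, 0))"
    unfolding U_L_def H_def[symmetric] Z_def[symmetric] N_def[symmetric] M_def[symmetric]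
    using H Z ij i_NM
    by (intro index_mult_kron_one[where m = "N * M"]) auto
  also have "\<dots> = (\<Sum>l<N. H $$ (0, l) * H $$ (l, 0) * (downshift M ^\<^sub>m l) $$ (i, j))"
    by (intro sum.cong) (simp_all add: row)
  also have "\<dots> = (\<Sum>l<N. if l = i - j then (if j \<le> i then 1 / 2 ^ n else 0) else 0)"
    using ij
    by (intro sum.cong) (auto simp: H_def N_def M_def index_downshift_pow hadamard_pow_first_row_col_mult)
  finally show ?thesis
    using ij by (simp add: less_imp_diff_less)
qed

theorem theorem9:
  fixes n i j :: nat
  assumes "n \<ge> 1" and "i < 2 ^ n" and "j < 2 ^ n"
  shows "(kron (bra (2 ^ n) 0) (bra (2 * 2 ^ n) i) * U_L n
            * kron (ket (2 ^ n) 0) (ket (2 * 2 ^ n) j)) $$ (0, 0)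
         = (1 / of_nat (2 ^ n)) * lower_ones (2 ^ n) $$ (i, j)"
proof -
  let ?D = "2 ^ n * (2 * 2 ^ n)"
  have "kron (bra (2 ^ n) 0) (bra (2 * 2 ^ n) i) = bra ?D i"
    and "kron (ket (2 ^ n) 0) (ket (2 * 2 ^ n) j) = ket ?D j"
    using assms kron_bra[of 0 "2 ^ n" i] kron_ket[of 0 "2 ^ n" j] by simp_all
  moreover have "(bra ?D i * U_L n * ket ?D j) $$ (0, 0) = U_L n $$ (i, j)"
  proof (rule index_bra_mult_ket)
    show "U_L n \<in> carrier_mat ?D ?D"
      by (rule carrier_matI) (simp_all add: U_L_def)
    show "i < ?D" "j < ?D"
      using assms mult_add_less_mult_nat[of 0 "2 ^ n"] by simp_all
  qed
  ultimately show ?thesis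
    using assms by (simp add: index_U_L lower_ones_def)
qed

end
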